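(* Let $A$ be a finite nonempty subset of $(0,\infty)$ and let $f:A\to[0,\infty)$. Let $f\circ f$ denote the function defined on $A_2=\{a\in A: f(a)\in A\}$ by $a\mapsto f(f(a))$, and let $h_f=\{(f(a)/a,\,a):a\in A\}$. Then $h_f=f\circ f$ (i.e. $\{(f(a)/a,a):a\in A\}=\{(a,f(f(a))):a\in A_2\}$) if and only if $A=\{1\}$ and $f(1)=1$, i.e. $f=\{(1,1)\}$.
   Context: For a function $f$ on a finite set $A\subset(0,\infty)$, the Hirsch function $h_f$ is defined exactly at the points $f(a)/a$, $a\in A$, and maps $f(a)/a$ to $a$. Equality of functions means same domain and same values. *)

theory Defs
  imports Main "HOL.Real"
begin

definition hirsch_graph :: "(real \<Rightarrow> real) \<Rightarrow> real set \<Rightarrow> (real \<times> real) set" where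
  "hirsch_graph f A = {(f a / a, a) | a. a \<in> A}"

definition comp_graph :: "(real \<Rightarrow> real) \<Rightarrow> real set \<Rightarrow> (real \<times> real) set" where
  "comp_graph f A = {(a, f (f a)) | a. a \<in> A \<and> f a \<in> A}"

end

theory Submission
  imports Defs Complex_Main
begin

(* If h_f = f o f, every a in A is f(f(c)) for c = f(a)/a in A, so a |-> f(a)/a and then f
   permute the finite set A, and f(a) = a c becomes f(f(f(c))) = f(f(c)) c.  Along the
   permutation f the logarithm y = ln therefore satisfies y o f^3 = y o f^2 + y; as sums over A
   are invariant under f, the sums of squares and of products of these shifts force
   sum of y^2 = 0, i.e. A = {1}. *)

lemma permutation_recurrence_vanishes:
  fixes y :: "'a \<Rightarrow> real"
  assumes "finite A" and perm: "bij_betw p A A"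
    and rec: "\<And>c. c \<in> A \<Longrightarrow> y (p (p (p c))) = y (p (p c)) + y c"
  shows "\<forall>c\<in>A. y c = 0"
proof -
  have inv1: "(\<Sum>c\<in>A. F (p c)) = sum F A" for F :: "'a \<Rightarrow> real"
    using sum.reindex_bij_betw[OF perm] .
  have inv2: "(\<Sum>c\<in>A. F (p (p c))) = sum F A" for F :: "'a \<Rightarrow> real"
    using inv1[of "\<lambda>c. F (p c)"] inv1[of F] by simp
  have inv3: "(\<Sum>c\<in>A. F (p (p (p c)))) = sum F A" for F :: "'a \<Rightarrow> real"
    using inv1[of "\<lambda>c. F (p (p c))"] inv2[of F] by simp
  define S where "S = (\<Sum>c\<in>A. y c ^ 2)"
  define P1 where "P1 = (\<Sum>c\<in>A. y c * y (p c))"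
  define P2 where "P2 = (\<Sum>c\<in>A. y c * y (p (p c)))"
  (* Writing x_k for y o p^k, sum over A the square of x_0 = x_3 - x_2, the square of
     x_3 = x_2 + x_0 and the product of x_3 = x_2 + x_0 with x_1; since p permutes A,
     these sums collapse to S = 2 P1, S = 2 S + 2 P2 and P2 = 2 P1, which force S = 0. *)
  have "S = (\<Sum>c\<in>A. y (p (p (p c))) ^ 2 + y (p (p c)) ^ 2 - 2 * (y (p (p c)) * y (p (p (p c)))))"
    unfolding S_def by (rule sum.cong) (simp_all add: rec power2_eq_square algebra_simps)
  also have "\<dots> = S + S - 2 * P1"
    by (simp only: sum.distrib sum_subtractf sum_distrib_left[symmetric] S_def P1_def
        inv3[of "\<lambda>c. y c ^ 2"] inv2[of "\<lambda>c. y c ^ 2"] inv2[of "\<lambda>c. y c * y (p c)"])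
  finally have S_P1: "S = 2 * P1" by simp
  have "S = (\<Sum>c\<in>A. y (p (p (p c))) ^ 2)"
    unfolding S_def by (rule inv3[symmetric])
  also have "\<dots> = (\<Sum>c\<in>A. y (p (p c)) ^ 2 + y c ^ 2 + 2 * (y c * y (p (p c))))"
    by (rule sum.cong) (simp_all add: rec power2_eq_square algebra_simps)
  also have "\<dots> = S + S + 2 * P2"
    by (simp only: sum.distrib sum_distrib_left[symmetric] S_def P2_def inv2[of "\<lambda>c. y c ^ 2"])
  finally have S_P2: "S = 2 * S + 2 * P2" by simp
  have "P2 = (\<Sum>c\<in>A. y (p c) * y (p (p (p c))))"
    unfolding P2_def by (rule inv1[symmetric, of "\<lambda>c. y c * y (p (p c))"])
  also have "\<dots> = (\<Sum>c\<in>A. y (p c) * y (p (p c)) + y c * y (p c))"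
    by (rule sum.cong) (simp_all add: rec algebra_simps)
  also have "\<dots> = P1 + P1"
    by (simp only: sum.distrib P1_def inv1[of "\<lambda>c. y c * y (p c)"])
  finally have "P2 = 2 * P1" by simp
  with S_P1 S_P2 have "(\<Sum>c\<in>A. y c ^ 2) = 0"
    unfolding S_def by simp
  then show ?thesis
    using \<open>finite A\<close> by (simp add: sum_nonneg_eq_0_iff)
qed

lemma hirsch_graph_eq_comp_graphD:
  assumes "hirsch_graph f A = comp_graph f A" and "a \<in> A"
  shows "f a / a \<in> A" and "f (f a / a) \<in> A" and "f (f (f a / a)) = a"
proof -
  have "(f a / a, a) \<in> comp_graph f A"
    using assms unfolding hirsch_graph_def by auto
  then show "f a / a \<in> A" "f (f a / a) \<in> A" "f (f (f a / a)) = a"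
    unfolding comp_graph_def by auto
qed

lemma hirsch_graph_eq_comp_graph_bij_ratio:
  assumes "finite A" and H: "hirsch_graph f A = comp_graph f A"
  shows "bij_betw (\<lambda>a. f a / a) A A"
proof (rule bij_betw_imageI)
  show inj: "inj_on (\<lambda>a. f a / a) A"
  proof (rule inj_onI)
    fix a b assume "a \<in> A" "b \<in> A" "f a / a = f b / b"
    then show "a = b"
      using hirsch_graph_eq_comp_graphD(3)[OF H] by metis
  qed
  have "(\<lambda>a. f a / a) ` A \<subseteq> A"
    using hirsch_graph_eq_comp_graphD(1)[OF H] by blast
  then show "(\<lambda>a. f a / a) ` A = A"
    using endo_inj_surj[OF \<open>finite A\<close> _ inj] by blast
qed

lemma hirsch_graph_eq_comp_graph_bij:
  assumes "finite A" and H: "hirsch_graph f A = comp_graph f A"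
  shows "bij_betw f A A"
proof -
  have "f c \<in> A" if "c \<in> A" for c
  proof -
    obtain a where "a \<in> A" and "c = f a / a"
      using bij_betw_imp_surj_on[OF hirsch_graph_eq_comp_graph_bij_ratio[OF assms]] \<open>c \<in> A\<close>
      by blast
    then show ?thesis
      using hirsch_graph_eq_comp_graphD(2)[OF H] by blast
  qed
  then have "f ` A \<subseteq> A" by blast
  moreover have "A \<subseteq> f ` A"
  proof
    fix a assume "a \<in> A"
    then have "f (f a / a) \<in> A" and "a = f (f (f a / a))"
      using hirsch_graph_eq_comp_graphD(2,3)[OF H] by auto
    then show "a \<in> f ` A" by blast
  qed
  ultimately show ?thesis
    using finite_surj_inj[OF \<open>finite A\<close>] by (simp add: bij_betw_def)
qed

lemma hirsch_graph_eq_comp_graph_recurrence: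
  assumes "finite A" and H: "hirsch_graph f A = comp_graph f A"
    and "0 \<notin> A" and "c \<in> A"
  shows "f (f (f c)) = f (f c) * c"
proof -
  obtain a where "a \<in> A" and c: "c = f a / a"
    using bij_betw_imp_surj_on[OF hirsch_graph_eq_comp_graph_bij_ratio[OF assms(1,2)]] \<open>c \<in> A\<close>
    by blast
  then have "f (f c) = a"
    using hirsch_graph_eq_comp_graphD(3)[OF H] by blast
  moreover have "f a = a * c"
    using \<open>a \<in> A\<close> \<open>0 \<notin> A\<close> c by fastforce
  ultimately show ?thesis by simp
qed

theorem theorem10:
  fixes A :: "real set" and f :: "real \<Rightarrow> real"
  assumes "finite A" and "A \<noteq> {}" and "\<forall>a\<in>A. a > 0"
    and "\<forall>a\<in>A. f a \<ge> 0"
  shows "hirsch_graph f A = comp_graph f A \<longleftrightarrow> (A = {1} \<and> f 1 = 1)"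
proof
  assume H: "hirsch_graph f A = comp_graph f A"
  have bij: "bij_betw f A A"
    using hirsch_graph_eq_comp_graph_bij[OF \<open>finite A\<close> H] .
  then have f_in: "f c \<in> A" if "c \<in> A" for c
    using that bij_betwE by blast
  have "0 \<notin> A"
    using assms(3) by auto
  have "ln (f (f (f c))) = ln (f (f c)) + ln c" if "c \<in> A" for c
  proof -
    have "f (f c) > 0" and "c > 0"
      using that f_in assms(3) by blast+
    then show ?thesis
      using hirsch_graph_eq_comp_graph_recurrence[OF \<open>finite A\<close> H \<open>0 \<notin> A\<close> that]
      by (simp add: ln_mult)
  qed
  then have "\<forall>c\<in>A. ln c = 0"
    by (rule permutation_recurrence_vanishes[OF \<open>finite A\<close> bij])
  then have "A = {1}"
    using \<open>A \<noteq> {}\<close> assms(3) by fastforce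
  then show "A = {1} \<and> f 1 = 1"
    using f_in[of 1] by simp
next
  assume "A = {1} \<and> f 1 = 1"
  then show "hirsch_graph f A = comp_graph f A"
    unfolding hirsch_graph_def comp_graph_def by auto
qed

end
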